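(* Let $n\ge 1$ and let $L_1,L_2,\underline{b}$ be positive constants. Assume that $(k_p,k_d)\in(0,\infty)\times(0,\infty)$ satisfies $k_p^2>\bar k$ and $k_d^2>k_p/\underline{b}+\bar k$, where $\bar k=(L_1+L_2)(k_p+k_d)/\underline{b}$. Then the $2n\times 2n$ matrix $$P=\begin{bmatrix} 2k_pk_d\underline{b}I_n & k_pI_n\\ k_pI_n & k_dI_n\end{bmatrix}$$ is positive definite. Moreover, for $$A=\begin{bmatrix}0_n & I_n\\ a-k_p\theta & b-k_d\theta\end{bmatrix},$$ where $a,b,\theta$ are $n\times n$ constant matrices satisfying $\|a\|\le L_1$, $\|b\|\le L_2$ and $(\theta+\theta^{\mathsf{T}})/2\ge \underline{b}I_n>0$, there exists $\beta>0$ depending only on $(k_p,k_d,L_1,L_2,\underline{b})$ such that $PA+A^{\mathsf{T}}P\le -\beta I_{2n}$ for all such $a,b,\theta$.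
   Context: Here $I_n$ and $0_n$ are the $n\times n$ identity and zero matrices, $\|\cdot\|$ is the induced Euclidean (operator) norm of a matrix, and for symmetric matrices $S_1\ge S_2$ (resp. $S_1>S_2$) means $S_1-S_2$ is positive semi-definite (resp. positive definite). *)

theory Defs
  imports "Jordan_Normal_Form.Matrix"
begin

definition vnorm :: "real vec \<Rightarrow> real" where
  "vnorm v = sqrt (v \<bullet> v)"

definition op_norm :: "real mat \<Rightarrow> real" where
  "op_norm A = Sup {vnorm (A *\<^sub>v x) | x. x \<in> carrier_vec (dim_col A) \<and> vnorm x \<le> 1}"

definition loewner_le :: "nat \<Rightarrow> real mat \<Rightarrow> real mat \<Rightarrow> bool" where
  "loewner_le n S1 S2 \<longleftrightarrow> S1 \<in> carrier_mat n n \<and> S2 \<in> carrier_mat n n \<and>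
     (\<forall>x \<in> carrier_vec n. x \<bullet> ((S2 - S1) *\<^sub>v x) \<ge> 0)"

definition loewner_less :: "nat \<Rightarrow> real mat \<Rightarrow> real mat \<Rightarrow> bool" where
  "loewner_less n S1 S2 \<longleftrightarrow> S1 \<in> carrier_mat n n \<and> S2 \<in> carrier_mat n n \<and>
     (\<forall>x \<in> carrier_vec n. x \<noteq> 0\<^sub>v n \<longrightarrow> x \<bullet> ((S2 - S1) *\<^sub>v x) > 0)"

definition pos_definite :: "nat \<Rightarrow> real mat \<Rightarrow> bool" where
  "pos_definite n P \<longleftrightarrow> P\<^sup>T = P \<and> loewner_less n (0\<^sub>m n n) P"

end

(*
  Write z = (x, y) and u = kp x + kd y. Then kd z'Pz = |u|^2 + kp (2 bl kd^2 - kp) |x|^2, so P is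
  positive definite as soon as bl kd^2 > kp. For the Lyapunov form, z'(PA + A'P)z = 2 (Pz).(Az)
  and (Pz).(Az) = 2 kp kd bl x.y + kp |y|^2 + u.(a x + b y) - u.(theta u). The bound on the
  symmetric part of theta gives u.(theta u) >= bl |u|^2, whose cross term cancels 2 kp kd bl x.y,
  while Cauchy-Schwarz and the operator norm bounds give
  u.(a x + b y) <= (kp|x| + kd|y|)(L1|x| + L2|y|) <= (L1 + L2)(kp + kd)(|x|^2 + |y|^2).
  What remains is -(bl kp^2 - K)|x|^2 - (bl kd^2 - kp - K)|y|^2 with K = (L1 + L2)(kp + kd),
  and the hypotheses say exactly that both coefficients are positive.
*)
theory Submission
  imports Defs
begin

lemma smult_mat_mult_vec:
  fixes A :: "real mat"
  assumes "A \<in> carrier_mat nr nc" "v \<in> carrier_vec nc"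
  shows "(k \<cdot>\<^sub>m A) *\<^sub>v v = k \<cdot>\<^sub>v (A *\<^sub>v v)"
  using assms by (intro eq_vecI) (auto simp: scalar_prod_def sum_distrib_left mult.assoc)

lemma scalar_prod_self_nonneg: "0 \<le> (v :: real vec) \<bullet> v"
  unfolding scalar_prod_def by (rule sum_nonneg) simp

lemma scalar_prod_self_eq_0_iff:
  fixes v :: "real vec"
  assumes "v \<in> carrier_vec n"
  shows "v \<bullet> v = 0 \<longleftrightarrow> v = 0\<^sub>v n"
proof
  assume "v \<bullet> v = 0"
  then have "\<forall>i\<in>{0..<n}. v $ i * v $ i = 0"
    using assms by (subst sum_nonneg_eq_0_iff[symmetric]) (auto simp: scalar_prod_def)
  then show "v = 0\<^sub>v n" using assms by (intro eq_vecI) auto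
qed (simp add: assms)

lemma vnorm_nonneg: "0 \<le> vnorm v"
  unfolding vnorm_def by (simp add: scalar_prod_self_nonneg)

lemma vnorm_power2: "vnorm v ^ 2 = v \<bullet> v"
  unfolding vnorm_def by (simp add: scalar_prod_self_nonneg)

lemma vnorm_smult: "vnorm (k \<cdot>\<^sub>v v) = \<bar>k\<bar> * vnorm v"
proof -
  have "(k \<cdot>\<^sub>v v) \<bullet> (k \<cdot>\<^sub>v v) = k\<^sup>2 * (v \<bullet> v)" by (simp add: power2_eq_square)
  then show ?thesis by (simp add: vnorm_def real_sqrt_mult)
qed

lemma vnorm_eq_0_iff: "v \<in> carrier_vec n \<Longrightarrow> vnorm v = 0 \<longleftrightarrow> v = 0\<^sub>v n"
  by (simp add: vnorm_def scalar_prod_self_eq_0_iff)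

lemma scalar_prod_le_vnorm_mult:
  fixes v w :: "real vec"
  assumes v: "v \<in> carrier_vec n" and w: "w \<in> carrier_vec n"
  shows "v \<bullet> w \<le> vnorm v * vnorm w"
proof (cases "vnorm v * vnorm w = 0")
  case True
  then have "v = 0\<^sub>v n \<or> w = 0\<^sub>v n" using v w vnorm_eq_0_iff by auto
  then show ?thesis using v w True by auto
next
  case False
  define X Y where "X = vnorm v" and "Y = vnorm w"
  have "0 \<le> (Y \<cdot>\<^sub>v v - X \<cdot>\<^sub>v w) \<bullet> (Y \<cdot>\<^sub>v v - X \<cdot>\<^sub>v w)"
    by (rule scalar_prod_self_nonneg)
  also have "\<dots> = Y\<^sup>2 * (v \<bullet> v) - 2 * X * Y * (v \<bullet> w) + X\<^sup>2 * (w \<bullet> w)"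
    using v w comm_scalar_prod[OF v w]
    by (simp add: scalar_prod_minus_distrib[of _ n] minus_scalar_prod_distrib[of _ n]
        power2_eq_square algebra_simps)
  also have "\<dots> = 2 * (X * Y) * (X * Y - v \<bullet> w)"
    unfolding X_def Y_def vnorm_power2[symmetric] by (simp add: power2_eq_square algebra_simps)
  finally have "0 \<le> 2 * (X * Y) * (X * Y - v \<bullet> w)" .
  moreover have "0 < X * Y"
    using False vnorm_nonneg[of v] vnorm_nonneg[of w] by (simp add: X_def Y_def)
  ultimately show ?thesis by (simp add: X_def Y_def zero_le_mult_iff)
qed

lemma abs_scalar_prod_le_vnorm_mult:
  fixes v w :: "real vec"
  assumes "v \<in> carrier_vec n" "w \<in> carrier_vec n"
  shows "\<bar>v \<bullet> w\<bar> \<le> vnorm v * vnorm w"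
  using scalar_prod_le_vnorm_mult[OF assms] scalar_prod_le_vnorm_mult[of "(-1) \<cdot>\<^sub>v v" n w] assms
  by (simp add: vnorm_smult)

lemma vnorm_add_le:
  fixes v w :: "real vec"
  assumes v: "v \<in> carrier_vec n" and w: "w \<in> carrier_vec n"
  shows "vnorm (v + w) \<le> vnorm v + vnorm w"
proof (rule power2_le_imp_le)
  have "vnorm (v + w) ^ 2 = v \<bullet> v + 2 * (v \<bullet> w) + w \<bullet> w"
    using v w comm_scalar_prod[OF v w]
    by (simp add: vnorm_power2 scalar_prod_add_distrib[of _ n] add_scalar_prod_distrib[of _ n])
  also have "\<dots> \<le> (vnorm v + vnorm w) ^ 2"
    using scalar_prod_le_vnorm_mult[OF v w] by (simp add: power2_sum vnorm_power2)
  finally show "vnorm (v + w) ^ 2 \<le> (vnorm v + vnorm w) ^ 2" .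
qed (simp add: vnorm_nonneg add_nonneg_nonneg)

lemma vnorm_mult_mat_vec_le_frobenius:
  fixes A :: "real mat"
  assumes A: "A \<in> carrier_mat m n" and w: "w \<in> carrier_vec n"
  shows "vnorm (A *\<^sub>v w) \<le> sqrt (\<Sum>i<m. row A i \<bullet> row A i) * vnorm w"
proof -
  have "(A *\<^sub>v w) \<bullet> (A *\<^sub>v w) = (\<Sum>i<m. (row A i \<bullet> w)\<^sup>2)"
    using A w by (simp add: scalar_prod_def[of "A *\<^sub>v w"] power2_eq_square atLeast0LessThan)
  also have "\<dots> \<le> (\<Sum>i<m. (row A i \<bullet> row A i) * (w \<bullet> w))"
  proof (rule sum_mono)
    fix i assume "i \<in> {..<m}"
    then have r: "row A i \<in> carrier_vec n" using A by auto
    have "(row A i \<bullet> w)\<^sup>2 \<le> (vnorm (row A i) * vnorm w)\<^sup>2"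
      using abs_scalar_prod_le_vnorm_mult[OF r w] by (simp add: power_mono flip: abs_le_square_iff)
    then show "(row A i \<bullet> w)\<^sup>2 \<le> (row A i \<bullet> row A i) * (w \<bullet> w)"
      by (simp add: power_mult_distrib vnorm_power2)
  qed
  finally have "(A *\<^sub>v w) \<bullet> (A *\<^sub>v w) \<le> (\<Sum>i<m. row A i \<bullet> row A i) * (w \<bullet> w)"
    by (simp add: sum_distrib_right)
  then show ?thesis unfolding vnorm_def real_sqrt_mult[symmetric] by (rule real_sqrt_le_mono)
qed

lemma vnorm_mult_mat_vec_le_op_norm:
  fixes A :: "real mat"
  assumes A: "A \<in> carrier_mat m n" and x: "x \<in> carrier_vec n"
  shows "vnorm (A *\<^sub>v x) \<le> op_norm A * vnorm x"
proof (cases "vnorm x = 0")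
  case True
  then show ?thesis using vnorm_mult_mat_vec_le_frobenius[OF A x] vnorm_nonneg[of "A *\<^sub>v x"] by simp
next
  case False
  let ?S = "{vnorm (A *\<^sub>v w) | w. w \<in> carrier_vec (dim_col A) \<and> vnorm w \<le> 1}"
  have bdd: "bdd_above ?S"
  proof (rule bdd_aboveI)
    fix s assume "s \<in> ?S"
    then obtain w where w: "w \<in> carrier_vec n" "vnorm w \<le> 1" and s: "s = vnorm (A *\<^sub>v w)"
      using A by auto
    have "s \<le> sqrt (\<Sum>i<m. row A i \<bullet> row A i) * vnorm w"
      unfolding s by (rule vnorm_mult_mat_vec_le_frobenius[OF A w(1)])
    also have "\<dots> \<le> sqrt (\<Sum>i<m. row A i \<bullet> row A i)"
      using w(2) by (intro mult_left_le) (auto intro: sum_nonneg scalar_prod_self_nonneg)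
    finally show "s \<le> sqrt (\<Sum>i<m. row A i \<bullet> row A i)" .
  qed
  have pos: "0 < vnorm x" using False vnorm_nonneg[of x] by simp
  define w where "w = (1 / vnorm x) \<cdot>\<^sub>v x"
  have "w \<in> carrier_vec n" "vnorm w = 1" using pos x by (auto simp: w_def vnorm_smult)
  then have "vnorm (A *\<^sub>v w) \<le> op_norm A"
    unfolding op_norm_def using A by (intro cSup_upper[OF _ bdd]) auto
  moreover have "A *\<^sub>v w = (1 / vnorm x) \<cdot>\<^sub>v (A *\<^sub>v x)"
    unfolding w_def using A x by (simp add: mult_mat_vec)
  ultimately show ?thesis using pos by (simp add: vnorm_smult field_simps)
qed

lemma carrier_vec_append_cases:
  assumes "z \<in> carrier_vec (n + m)"
  obtains x y where "x \<in> carrier_vec n" "y \<in> carrier_vec m" "z = x @\<^sub>v y"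
  using assms vec_first_last_append by (metis vec_first_carrier vec_last_carrier)

lemma quadratic_form_lyapunov:
  fixes P A :: "real mat"
  assumes P: "P \<in> carrier_mat m m" "P\<^sup>T = P" and A: "A \<in> carrier_mat m m"
    and z: "z \<in> carrier_vec m"
  shows "z \<bullet> ((P * A + A\<^sup>T * P) *\<^sub>v z) = 2 * ((P *\<^sub>v z) \<bullet> (A *\<^sub>v z))"
proof -
  have Pz: "P *\<^sub>v z \<in> carrier_vec m" and Az: "A *\<^sub>v z \<in> carrier_vec m" using P A z by auto
  have "z \<bullet> (P *\<^sub>v (A *\<^sub>v z)) = (P *\<^sub>v z) \<bullet> (A *\<^sub>v z)"
    using transpose_vec_mult_scalar[OF P(1) Az z] P(2) by simp
  moreover have "z \<bullet> (A\<^sup>T *\<^sub>v (P *\<^sub>v z)) = (P *\<^sub>v z) \<bullet> (A *\<^sub>v z)"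
    using transpose_vec_mult_scalar[OF A z Pz] comm_scalar_prod[of z m "A\<^sup>T *\<^sub>v (P *\<^sub>v z)"] A z Pz
    by simp
  ultimately show ?thesis
    using P A z by (simp add: add_mult_distrib_mat_vec[of _ m m] scalar_prod_add_distrib[of _ m])
qed

lemma loewner_le_neg_smult_oneI:
  fixes S :: "real mat"
  assumes S: "S \<in> carrier_mat m m"
    and form: "\<And>z. z \<in> carrier_vec m \<Longrightarrow> z \<bullet> (S *\<^sub>v z) \<le> - \<beta> * (z \<bullet> z)"
  shows "loewner_le m S ((- \<beta>) \<cdot>\<^sub>m 1\<^sub>m m)"
  unfolding loewner_le_def
proof (intro conjI ballI)
  fix z :: "real vec" assume z: "z \<in> carrier_vec m"
  have "((- \<beta>) \<cdot>\<^sub>m 1\<^sub>m m - S) *\<^sub>v z = (- \<beta>) \<cdot>\<^sub>v z - S *\<^sub>v z"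
    using S z by (simp add: minus_mult_distrib_mat_vec[of _ m m] smult_mat_mult_vec[of _ m m])
  then show "0 \<le> z \<bullet> (((- \<beta>) \<cdot>\<^sub>m 1\<^sub>m m - S) *\<^sub>v z)"
    using form[OF z] S z by (simp add: scalar_prod_minus_distrib[of _ m])
qed (use S in auto)

lemma pos_definiteI:
  fixes P :: "real mat"
  assumes "P \<in> carrier_mat m m" "P\<^sup>T = P"
    and "\<And>z. z \<in> carrier_vec m \<Longrightarrow> z \<noteq> 0\<^sub>v m \<Longrightarrow> 0 < z \<bullet> (P *\<^sub>v z)"
  shows "pos_definite m P"
proof -
  have "P - 0\<^sub>m m m = P" using assms(1) by (intro eq_matI) auto
  then show ?thesis using assms unfolding pos_definite_def loewner_less_def by auto
qed

lemma quadratic_form_ge_of_loewner_le: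
  fixes \<theta> :: "real mat"
  assumes \<theta>: "\<theta> \<in> carrier_mat n n" and u: "u \<in> carrier_vec n"
    and le: "loewner_le n (\<mu> \<cdot>\<^sub>m 1\<^sub>m n) ((1 / 2) \<cdot>\<^sub>m (\<theta> + \<theta>\<^sup>T))"
  shows "\<mu> * (u \<bullet> u) \<le> u \<bullet> (\<theta> *\<^sub>v u)"
proof -
  have "0 \<le> u \<bullet> (((1 / 2) \<cdot>\<^sub>m (\<theta> + \<theta>\<^sup>T) - \<mu> \<cdot>\<^sub>m 1\<^sub>m n) *\<^sub>v u)"
    using le u unfolding loewner_le_def by blast
  also have "((1 / 2) \<cdot>\<^sub>m (\<theta> + \<theta>\<^sup>T) - \<mu> \<cdot>\<^sub>m 1\<^sub>m n) *\<^sub>v u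
     = (1 / 2) \<cdot>\<^sub>v (\<theta> *\<^sub>v u) + (1 / 2) \<cdot>\<^sub>v (\<theta>\<^sup>T *\<^sub>v u) - \<mu> \<cdot>\<^sub>v u"
    using \<theta> u by (simp add: minus_mult_distrib_mat_vec[of _ n n] smult_mat_mult_vec[of _ n n]
        add_mult_distrib_mat_vec[of _ n n] smult_add_distrib_vec[of _ n])
  also have "u \<bullet> \<dots> = (1 / 2) * (u \<bullet> (\<theta> *\<^sub>v u)) + (1 / 2) * (u \<bullet> (\<theta>\<^sup>T *\<^sub>v u)) - \<mu> * (u \<bullet> u)"
    using \<theta> u by (simp add: scalar_prod_minus_distrib[of _ n] scalar_prod_add_distrib[of _ n])
  also have "u \<bullet> (\<theta>\<^sup>T *\<^sub>v u) = u \<bullet> (\<theta> *\<^sub>v u)"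
    using transpose_vec_mult_scalar[OF \<theta> u u] comm_scalar_prod[of u n "\<theta>\<^sup>T *\<^sub>v u"] \<theta> u by simp
  finally show ?thesis by simp
qed

lemma scalar_block_mat_carrier:
  "four_block_mat (c \<cdot>\<^sub>m 1\<^sub>m n) (p \<cdot>\<^sub>m 1\<^sub>m n) (p \<cdot>\<^sub>m 1\<^sub>m n) (d \<cdot>\<^sub>m 1\<^sub>m n) \<in> carrier_mat (2 * n) (2 * n)"
  unfolding mult_2 by (rule four_block_carrier_mat) auto

lemma transpose_scalar_block_mat:
  "(four_block_mat (c \<cdot>\<^sub>m 1\<^sub>m n) (p \<cdot>\<^sub>m 1\<^sub>m n) (p \<cdot>\<^sub>m 1\<^sub>m n) (d \<cdot>\<^sub>m 1\<^sub>m n))\<^sup>T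
    = four_block_mat (c \<cdot>\<^sub>m 1\<^sub>m n) (p \<cdot>\<^sub>m 1\<^sub>m n) (p \<cdot>\<^sub>m 1\<^sub>m n) (d \<cdot>\<^sub>m (1\<^sub>m n :: real mat))"
  by (subst transpose_four_block_mat[of _ n n _ n _ n]) auto

lemma scalar_block_mat_mult_append:
  fixes x y :: "real vec"
  assumes "x \<in> carrier_vec n" "y \<in> carrier_vec n"
  shows "four_block_mat (c \<cdot>\<^sub>m 1\<^sub>m n) (p \<cdot>\<^sub>m 1\<^sub>m n) (p \<cdot>\<^sub>m 1\<^sub>m n) (d \<cdot>\<^sub>m 1\<^sub>m n) *\<^sub>v (x @\<^sub>v y)
     = (c \<cdot>\<^sub>v x + p \<cdot>\<^sub>v y) @\<^sub>v (p \<cdot>\<^sub>v x + d \<cdot>\<^sub>v y)"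
  using assms by (subst four_block_mat_mult_vec[of _ n n _ n _ n]) (auto simp: smult_mat_mult_vec)

lemma companion_block_mat_mult_append:
  fixes F G :: "real mat"
  assumes "F \<in> carrier_mat n n" "G \<in> carrier_mat n n" "x \<in> carrier_vec n" "y \<in> carrier_vec n"
  shows "four_block_mat (0\<^sub>m n n) (1\<^sub>m n) F G *\<^sub>v (x @\<^sub>v y) = y @\<^sub>v (F *\<^sub>v x + G *\<^sub>v y)"
proof -
  have "0\<^sub>m n n *\<^sub>v x + 1\<^sub>m n *\<^sub>v y = y" using assms by (intro eq_vecI) (auto simp: scalar_prod_def)
  then show ?thesis using assms by (subst four_block_mat_mult_vec[of _ n n _ n _ n]) auto
qed

lemma pos_definite_scalar_block_mat:
  fixes c p d :: real
  assumes d: "0 < d" and det: "p\<^sup>2 < c * d"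
  shows "pos_definite (2 * n) (four_block_mat (c \<cdot>\<^sub>m 1\<^sub>m n) (p \<cdot>\<^sub>m 1\<^sub>m n) (p \<cdot>\<^sub>m 1\<^sub>m n) (d \<cdot>\<^sub>m 1\<^sub>m n))"
proof (rule pos_definiteI[OF scalar_block_mat_carrier transpose_scalar_block_mat])
  fix z :: "real vec" assume z: "z \<in> carrier_vec (2 * n)" and nz: "z \<noteq> 0\<^sub>v (2 * n)"
  obtain x y where x: "x \<in> carrier_vec n" and y: "y \<in> carrier_vec n" and zxy: "z = x @\<^sub>v y"
    using z unfolding mult_2 by (rule carrier_vec_append_cases)
  have "0 < z \<bullet> z" using nz z scalar_prod_self_eq_0_iff[OF z] scalar_prod_self_nonneg[of z] by auto
  then have xy_pos: "0 < x \<bullet> x + y \<bullet> y" unfolding zxy using scalar_prod_append[OF x y x y] by simp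
  define u where "u = p \<cdot>\<^sub>v x + d \<cdot>\<^sub>v y"
  have uu: "u \<bullet> u = p\<^sup>2 * (x \<bullet> x) + 2 * p * d * (x \<bullet> y) + d\<^sup>2 * (y \<bullet> y)"
    unfolding u_def using x y comm_scalar_prod[OF x y]
    by (simp add: scalar_prod_add_distrib[of _ n] add_scalar_prod_distrib[of _ n] power2_eq_square
        algebra_simps)
  have "z \<bullet> (four_block_mat (c \<cdot>\<^sub>m 1\<^sub>m n) (p \<cdot>\<^sub>m 1\<^sub>m n) (p \<cdot>\<^sub>m 1\<^sub>m n) (d \<cdot>\<^sub>m 1\<^sub>m n) *\<^sub>v z)
      = c * (x \<bullet> x) + 2 * p * (x \<bullet> y) + d * (y \<bullet> y)" (is "_ = ?q")
    unfolding zxy scalar_block_mat_mult_append[OF x y] using x y comm_scalar_prod[OF x y]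
    by (simp add: scalar_prod_append[of _ n _ n] scalar_prod_add_distrib[of _ n] algebra_simps)
  moreover have "d * ?q = u \<bullet> u + (c * d - p\<^sup>2) * (x \<bullet> x)"
    unfolding uu by (simp add: power2_eq_square algebra_simps)
  moreover have "0 < u \<bullet> u + (c * d - p\<^sup>2) * (x \<bullet> x)"
  proof (cases "x \<bullet> x = 0")
    case True
    then have "x = 0\<^sub>v n" using scalar_prod_self_eq_0_iff[OF x] by simp
    then show ?thesis using True xy_pos d y uu by simp
  next
    case False
    then show ?thesis using det scalar_prod_self_nonneg[of x] scalar_prod_self_nonneg[of u]
      by (simp add: add_nonneg_pos)
  qed
  ultimately show "0 < z \<bullet> (four_block_mat (c \<cdot>\<^sub>m 1\<^sub>m n) (p \<cdot>\<^sub>m 1\<^sub>m n) (p \<cdot>\<^sub>m 1\<^sub>m n) (d \<cdot>\<^sub>m 1\<^sub>m n) *\<^sub>v z)"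
    using d by (metis zero_less_mult_pos)
qed

lemma linear_forms_mult_le:
  fixes p q l m X Y :: real
  assumes "0 \<le> p" "0 \<le> q" "0 \<le> l" "0 \<le> m"
  shows "(p * X + q * Y) * (l * X + m * Y) \<le> (p + q) * (l + m) * (X\<^sup>2 + Y\<^sup>2)"
proof -
  have "0 \<le> X\<^sup>2 + Y\<^sup>2 - X * Y"
    using sum_squares_bound[of X Y] zero_le_power2[of X] zero_le_power2[of Y] by linarith
  then have "0 \<le> p * l * Y\<^sup>2 + q * m * X\<^sup>2 + (p * m + q * l) * (X\<^sup>2 + Y\<^sup>2 - X * Y)"
    using assms by (intro add_nonneg_nonneg mult_nonneg_nonneg) auto
  then show ?thesis by (simp add: power2_eq_square algebra_simps)
qed

text \<open>The upper-left block 2 kp kd \<mu> of P is what makes the cross terms in x \<bullet> y cancel.\<close>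

lemma lyapunov_pairing_le:
  fixes kp kd \<mu> L1 L2 :: real and a b \<theta> :: "real mat" and x y :: "real vec"
  assumes kp: "0 \<le> kp" and kd: "0 \<le> kd" and L1: "0 \<le> L1" and L2: "0 \<le> L2"
    and a: "a \<in> carrier_mat n n" and b: "b \<in> carrier_mat n n" and \<theta>: "\<theta> \<in> carrier_mat n n"
    and na: "op_norm a \<le> L1" and nb: "op_norm b \<le> L2"
    and sym: "loewner_le n (\<mu> \<cdot>\<^sub>m 1\<^sub>m n) ((1 / 2) \<cdot>\<^sub>m (\<theta> + \<theta>\<^sup>T))"
    and x: "x \<in> carrier_vec n" and y: "y \<in> carrier_vec n"
  shows "(2 * kp * kd * \<mu> \<cdot>\<^sub>v x + kp \<cdot>\<^sub>v y) \<bullet> y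
           + (kp \<cdot>\<^sub>v x + kd \<cdot>\<^sub>v y) \<bullet> ((a - kp \<cdot>\<^sub>m \<theta>) *\<^sub>v x + (b - kd \<cdot>\<^sub>m \<theta>) *\<^sub>v y)
         \<le> - ((\<mu> * kp\<^sup>2 - (L1 + L2) * (kp + kd)) * (x \<bullet> x)
              + (\<mu> * kd\<^sup>2 - kp - (L1 + L2) * (kp + kd)) * (y \<bullet> y))"
proof -
  define u where "u = kp \<cdot>\<^sub>v x + kd \<cdot>\<^sub>v y"
  define X Y where "X = vnorm x" and "Y = vnorm y"
  have u: "u \<in> carrier_vec n" using x y by (simp add: u_def)
  have XY: "0 \<le> X" "0 \<le> Y" "x \<bullet> x = X\<^sup>2" "y \<bullet> y = Y\<^sup>2"
    by (simp_all add: X_def Y_def vnorm_nonneg vnorm_power2)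
  have "(a - kp \<cdot>\<^sub>m \<theta>) *\<^sub>v x + (b - kd \<cdot>\<^sub>m \<theta>) *\<^sub>v y = (a *\<^sub>v x + b *\<^sub>v y) - \<theta> *\<^sub>v u"
    unfolding u_def using a b \<theta> x y
    by (simp add: minus_mult_distrib_mat_vec[of _ n n] mult_add_distrib_mat_vec[of _ n n]
        smult_mat_mult_vec mult_mat_vec) (intro eq_vecI, auto)
  then have lhs: "(2 * kp * kd * \<mu> \<cdot>\<^sub>v x + kp \<cdot>\<^sub>v y) \<bullet> y
           + (kp \<cdot>\<^sub>v x + kd \<cdot>\<^sub>v y) \<bullet> ((a - kp \<cdot>\<^sub>m \<theta>) *\<^sub>v x + (b - kd \<cdot>\<^sub>m \<theta>) *\<^sub>v y)
      = 2 * kp * kd * \<mu> * (x \<bullet> y) + kp * (y \<bullet> y) + u \<bullet> (a *\<^sub>v x + b *\<^sub>v y) - u \<bullet> (\<theta> *\<^sub>v u)"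
    unfolding u_def[symmetric] using a b \<theta> x y u
    by (simp add: add_scalar_prod_distrib[of _ n] scalar_prod_minus_distrib[of _ n])
  have uu: "u \<bullet> u = kp\<^sup>2 * (x \<bullet> x) + 2 * kp * kd * (x \<bullet> y) + kd\<^sup>2 * (y \<bullet> y)"
    unfolding u_def using x y comm_scalar_prod[OF x y]
    by (simp add: scalar_prod_add_distrib[of _ n] add_scalar_prod_distrib[of _ n] power2_eq_square
        algebra_simps)
  have damping: "\<mu> * (u \<bullet> u) \<le> u \<bullet> (\<theta> *\<^sub>v u)"
    by (rule quadratic_form_ge_of_loewner_le[OF \<theta> u sym])
  have "vnorm (a *\<^sub>v x + b *\<^sub>v y) \<le> vnorm (a *\<^sub>v x) + vnorm (b *\<^sub>v y)"
    using a b x y by (intro vnorm_add_le[of _ n]) auto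
  also have "\<dots> \<le> op_norm a * X + op_norm b * Y"
    unfolding X_def Y_def
    by (intro add_mono vnorm_mult_mat_vec_le_op_norm[OF a x] vnorm_mult_mat_vec_le_op_norm[OF b y])
  also have "\<dots> \<le> L1 * X + L2 * Y"
    using na nb XY by (intro add_mono mult_right_mono) auto
  finally have ab: "vnorm (a *\<^sub>v x + b *\<^sub>v y) \<le> L1 * X + L2 * Y" .
  have "u \<bullet> (a *\<^sub>v x + b *\<^sub>v y) \<le> vnorm u * vnorm (a *\<^sub>v x + b *\<^sub>v y)"
    using u a b x y by (intro scalar_prod_le_vnorm_mult[of _ n]) auto
  also have "\<dots> \<le> (kp * X + kd * Y) * (L1 * X + L2 * Y)"
  proof (rule mult_mono[OF _ ab _ vnorm_nonneg])
    show "vnorm u \<le> kp * X + kd * Y"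
      using vnorm_add_le[of "kp \<cdot>\<^sub>v x" n "kd \<cdot>\<^sub>v y"] x y kp kd
      by (simp add: u_def X_def Y_def vnorm_smult)
    show "0 \<le> kp * X + kd * Y" using kp kd XY by simp
  qed
  also have "\<dots> \<le> (kp + kd) * (L1 + L2) * (X\<^sup>2 + Y\<^sup>2)"
    by (rule linear_forms_mult_le[OF kp kd L1 L2])
  finally have drift: "u \<bullet> (a *\<^sub>v x + b *\<^sub>v y) \<le> (L1 + L2) * (kp + kd) * (x \<bullet> x + y \<bullet> y)"
    by (simp add: XY mult.commute)
  show ?thesis
    unfolding lhs using drift damping uu by (simp add: algebra_simps)
qed

lemma lyapunov_scalar_block_mat:
  fixes kp kd \<mu> L1 L2 \<beta> :: real and a b \<theta> :: "real mat"
  assumes kp: "0 \<le> kp" and kd: "0 \<le> kd" and L1: "0 \<le> L1" and L2: "0 \<le> L2"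
    and a: "a \<in> carrier_mat n n" and b: "b \<in> carrier_mat n n" and \<theta>: "\<theta> \<in> carrier_mat n n"
    and na: "op_norm a \<le> L1" and nb: "op_norm b \<le> L2"
    and sym: "loewner_le n (\<mu> \<cdot>\<^sub>m 1\<^sub>m n) ((1 / 2) \<cdot>\<^sub>m (\<theta> + \<theta>\<^sup>T))"
    and \<beta>1: "\<beta> \<le> 2 * (\<mu> * kp\<^sup>2 - (L1 + L2) * (kp + kd))"
    and \<beta>2: "\<beta> \<le> 2 * (\<mu> * kd\<^sup>2 - kp - (L1 + L2) * (kp + kd))"
  shows "loewner_le (2 * n)
           (four_block_mat ((2 * kp * kd * \<mu>) \<cdot>\<^sub>m 1\<^sub>m n) (kp \<cdot>\<^sub>m 1\<^sub>m n) (kp \<cdot>\<^sub>m 1\<^sub>m n) (kd \<cdot>\<^sub>m 1\<^sub>m n)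
              * four_block_mat (0\<^sub>m n n) (1\<^sub>m n) (a - kp \<cdot>\<^sub>m \<theta>) (b - kd \<cdot>\<^sub>m \<theta>)
            + (four_block_mat (0\<^sub>m n n) (1\<^sub>m n) (a - kp \<cdot>\<^sub>m \<theta>) (b - kd \<cdot>\<^sub>m \<theta>))\<^sup>T
              * four_block_mat ((2 * kp * kd * \<mu>) \<cdot>\<^sub>m 1\<^sub>m n) (kp \<cdot>\<^sub>m 1\<^sub>m n) (kp \<cdot>\<^sub>m 1\<^sub>m n) (kd \<cdot>\<^sub>m 1\<^sub>m n))
           ((- \<beta>) \<cdot>\<^sub>m 1\<^sub>m (2 * n))"
    (is "loewner_le _ (?P * ?A + ?A\<^sup>T * ?P) _")
proof (rule loewner_le_neg_smult_oneI)
  have P: "?P \<in> carrier_mat (2 * n) (2 * n)" "?P\<^sup>T = ?P"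
    by (rule scalar_block_mat_carrier, rule transpose_scalar_block_mat)
  have A: "?A \<in> carrier_mat (2 * n) (2 * n)"
    unfolding mult_2 by (rule four_block_carrier_mat) (use a b \<theta> in auto)
  show "?P * ?A + ?A\<^sup>T * ?P \<in> carrier_mat (2 * n) (2 * n)" using P A by auto
  fix z :: "real vec" assume z: "z \<in> carrier_vec (2 * n)"
  obtain x y where x: "x \<in> carrier_vec n" and y: "y \<in> carrier_vec n" and zxy: "z = x @\<^sub>v y"
    using z unfolding mult_2 by (rule carrier_vec_append_cases)
  have "(?P *\<^sub>v z) \<bullet> (?A *\<^sub>v z)
      = (2 * kp * kd * \<mu> \<cdot>\<^sub>v x + kp \<cdot>\<^sub>v y) \<bullet> y
        + (kp \<cdot>\<^sub>v x + kd \<cdot>\<^sub>v y) \<bullet> ((a - kp \<cdot>\<^sub>m \<theta>) *\<^sub>v x + (b - kd \<cdot>\<^sub>m \<theta>) *\<^sub>v y)"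
  proof -
    have "a - kp \<cdot>\<^sub>m \<theta> \<in> carrier_mat n n" "b - kd \<cdot>\<^sub>m \<theta> \<in> carrier_mat n n" using a b \<theta> by auto
    then show ?thesis
      unfolding zxy scalar_block_mat_mult_append[OF x y] using a b \<theta> x y
      by (simp add: companion_block_mat_mult_append scalar_prod_append[of _ n _ n])
  qed
  also have "\<dots> \<le> - ((\<mu> * kp\<^sup>2 - (L1 + L2) * (kp + kd)) * (x \<bullet> x)
                    + (\<mu> * kd\<^sup>2 - kp - (L1 + L2) * (kp + kd)) * (y \<bullet> y))"
    by (rule lyapunov_pairing_le[OF kp kd L1 L2 a b \<theta> na nb sym x y])
  also have "\<dots> \<le> - (\<beta> / 2) * (x \<bullet> x + y \<bullet> y)"
  proof -
    have "\<beta> / 2 * (x \<bullet> x) \<le> (\<mu> * kp\<^sup>2 - (L1 + L2) * (kp + kd)) * (x \<bullet> x)"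
      "\<beta> / 2 * (y \<bullet> y) \<le> (\<mu> * kd\<^sup>2 - kp - (L1 + L2) * (kp + kd)) * (y \<bullet> y)"
      using \<beta>1 \<beta>2 by (intro mult_right_mono scalar_prod_self_nonneg; simp)+
    then show ?thesis by (simp add: distrib_left)
  qed
  finally have "(?P *\<^sub>v z) \<bullet> (?A *\<^sub>v z) \<le> - (\<beta> / 2) * (z \<bullet> z)"
    unfolding zxy using scalar_prod_append[OF x y x y] by simp
  then show "z \<bullet> ((?P * ?A + ?A\<^sup>T * ?P) *\<^sub>v z) \<le> - \<beta> * (z \<bullet> z)"
    using quadratic_form_lyapunov[OF P A z] by simp
qed

theorem proposition4p3:
  fixes L1 L2 bl kp kd :: real
  assumes "L1 > 0" and "L2 > 0" and "bl > 0" and "kp > 0" and "kd > 0"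
    and "kp ^ 2 > (L1 + L2) * (kp + kd) / bl"
    and "kd ^ 2 > kp / bl + (L1 + L2) * (kp + kd) / bl"
  shows "(\<forall>n::nat. n \<ge> 1 \<longrightarrow>
           pos_definite (2 * n)
             (four_block_mat ((2 * kp * kd * bl) \<cdot>\<^sub>m 1\<^sub>m n) (kp \<cdot>\<^sub>m 1\<^sub>m n)
                             (kp \<cdot>\<^sub>m 1\<^sub>m n) (kd \<cdot>\<^sub>m 1\<^sub>m n)))
       \<and> (\<exists>\<beta>::real. \<beta> > 0 \<and>
           (\<forall>n::nat. \<forall>a b \<theta> :: real mat. n \<ge> 1 \<longrightarrow>
              a \<in> carrier_mat n n \<longrightarrow> b \<in> carrier_mat n n \<longrightarrow> \<theta> \<in> carrier_mat n n \<longrightarrow>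
              op_norm a \<le> L1 \<longrightarrow> op_norm b \<le> L2 \<longrightarrow>
              loewner_le n (bl \<cdot>\<^sub>m 1\<^sub>m n) ((1 / 2) \<cdot>\<^sub>m (\<theta> + \<theta>\<^sup>T)) \<longrightarrow>
              (let P = four_block_mat ((2 * kp * kd * bl) \<cdot>\<^sub>m 1\<^sub>m n) (kp \<cdot>\<^sub>m 1\<^sub>m n)
                                      (kp \<cdot>\<^sub>m 1\<^sub>m n) (kd \<cdot>\<^sub>m 1\<^sub>m n);
                   A = four_block_mat (0\<^sub>m n n) (1\<^sub>m n)
                                      (a - kp \<cdot>\<^sub>m \<theta>) (b - kd \<cdot>\<^sub>m \<theta>)
               in loewner_le (2 * n) (P * A + A\<^sup>T * P) ((- \<beta>) \<cdot>\<^sub>m 1\<^sub>m (2 * n)))))"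
proof -
  define K where "K = (L1 + L2) * (kp + kd)"
  have K: "0 < K" using assms(1,2,4,5) by (simp add: K_def)
  have gap_x: "0 < bl * kp\<^sup>2 - K" and gap_y: "0 < bl * kd\<^sup>2 - kp - K"
    using assms(3,6,7) by (simp_all add: K_def field_simps)
  have "kp * kp < kp * (bl * kd\<^sup>2)" using gap_y K assms(4) by simp
  then have det: "kp\<^sup>2 < 2 * kp * kd * bl * kd"
    using assms(3,4,5) by (simp add: power2_eq_square algebra_simps)
  define \<beta> where "\<beta> = 2 * min (bl * kp\<^sup>2 - K) (bl * kd\<^sup>2 - kp - K)"
  have \<beta>: "0 < \<beta>" "\<beta> \<le> 2 * (bl * kp\<^sup>2 - K)" "\<beta> \<le> 2 * (bl * kd\<^sup>2 - kp - K)"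
    using gap_x gap_y unfolding \<beta>_def by (auto simp: min_def)
  show ?thesis
    unfolding Let_def
    using assms(1,2,4,5) det \<beta> unfolding K_def
    by (intro conjI exI[of _ \<beta>] allI impI pos_definite_scalar_block_mat lyapunov_scalar_block_mat) auto
qed

end
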